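(* For every integer $m\ge2$, $$S_m^2<S_{m+1}S_{m-1}<\Big(1+\frac{1}{m(m-1)}\Big)S_m^2.$$
   Context: $(S_n)_{n\ge0}$ is the integer sequence defined by $S_0=1$, $S_1=4$ and $(n+1)^2S_{n+1}=4(3n^2+3n+1)S_n-32n^2S_{n-1}$ for $n\ge1$; equivalently $S_n=\sum_{k=0}^n\binom nk\binom{2k}k\binom{2n-2k}{n-k}$. *)

theory Defs
  imports Complex_Main
begin

definition S :: "nat \<Rightarrow> nat" where
  "S n = (\<Sum>k\<le>n. (n choose k) * ((2*k) choose k) * ((2*n - 2*k) choose (n - k)))"

end

theory Submission
  imports Defs
begin

text \<open>
  The summands of \<open>S n\<close> admit a Zeilberger certificate \<open>G\<close>: the \<open>k\<close>-th summand of
  \<open>(n+1)\<^sup>2 S(n+1) - 4(3n\<^sup>2+3n+1) S(n) + 32n\<^sup>2 S(n-1)\<close> equals \<open>G(n,k+1) - G(n,k)\<close>, so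
  this combination telescopes to zero. In terms of \<open>r(n) = S(n)/S(n-1)\<close> the recurrence
  reads \<open>r(n+1) = \<phi>\<^sub>n(r(n))\<close> with \<open>\<phi>\<^sub>n\<close> increasing, and the claim is
  \<open>r(m) < r(m+1) < (1 + 1/(m(m-1))) r(m)\<close>. Induction through \<open>\<phi>\<^sub>n\<close> traps \<open>r(n)\<close> between
  \<open>8 - 8/n - 20/n\<^sup>3\<close> (for \<open>n \<ge> 8\<close>) and \<open>8 - 8/n + 10/n\<^sup>2\<close>. After clearing denominators,
  \<open>r < \<phi>\<^sub>n(r)\<close> is a concave quadratic inequality in \<open>r\<close> that holds at both ends of this
  interval, hence inside it; the upper inequality is a convex quadratic inequality that
  holds at the lower end, where the quadratic is already increasing. The cases \<open>m < 8\<close>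
  are checked numerically.
\<close>

definition S_summand :: "nat \<Rightarrow> nat \<Rightarrow> real" where
  "S_summand n k = real ((n choose k) * ((2*k) choose k) * ((2*n - 2*k) choose (n - k)))"

lemma S_eq_sum_summand: "real (S n) = (\<Sum>k\<le>n. S_summand n k)"
  unfolding S_def S_summand_def by simp

lemma S_summand_eq_0: "n < k \<Longrightarrow> S_summand n k = 0"
  unfolding S_summand_def by simp

lemma S_eq_sum_summand_lessThan:
  assumes "n < N"
  shows "real (S n) = (\<Sum>k<N. S_summand n k)"
  unfolding S_eq_sum_summand
  by (rule sum.mono_neutral_left) (use assms in \<open>auto simp: S_summand_eq_0\<close>)

lemma S_summand_fact:
  "S_summand (k + j) k = fact (k + j) * fact (2*k) * fact (2*j) / (fact k ^ 3 * fact j ^ 3)"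
proof -
  have "2*(k + j) - 2*k = 2*j" by simp
  then show ?thesis
    unfolding S_summand_def of_nat_mult
    by (simp add: binomial_fact mult_2 power3_eq_cube)
qed

lemma fact_double_Suc: "(fact (2 * Suc j) :: real) = (2*real j + 2) * (2*real j + 1) * fact (2*j)"
proof -
  have "2 * Suc j = Suc (Suc (2*j))" by simp
  then show ?thesis by (simp add: algebra_simps)
qed

lemma S_summand_Suc_right:
  "(real j + 1)^2 * S_summand (k + Suc j) k
     = 2 * (real k + real j + 1) * (2*real j + 1) * S_summand (k + j) k"
proof -
  have num: "(fact (k + Suc j) :: real) = (real k + real j + 1) * fact (k + j)"
    by (simp add: algebra_simps)
  have den: "(fact (Suc j) :: real) ^ 3 = (real j + 1)^3 * fact j ^ 3"
    by (simp add: power_mult_distrib add.commute)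
  have "real j + 1 \<noteq> 0" by linarith
  then show ?thesis
    unfolding S_summand_fact[of k "Suc j"] S_summand_fact[of k j] fact_double_Suc num den
    by (simp add: field_simps) algebra
qed

lemma S_summand_Suc_left:
  "(real k + 1)^2 * S_summand (Suc k + j) (Suc k)
     = 2 * (real k + real j + 1) * (2*real k + 1) * S_summand (k + j) k"
proof -
  have num: "(fact (Suc k + j) :: real) = (real k + real j + 1) * fact (k + j)"
    by (simp add: algebra_simps)
  have den: "(fact (Suc k) :: real) ^ 3 = (real k + 1)^3 * fact k ^ 3"
    by (simp add: power_mult_distrib add.commute)
  have "real k + 1 \<noteq> 0" by linarith
  then show ?thesis
    unfolding S_summand_fact[of "Suc k" j] S_summand_fact[of k j] fact_double_Suc num den
    by (simp add: field_simps) algebra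
qed

lemma two_of_nat_minus_one_neq_0: "2 * real j - 1 \<noteq> 0"
proof
  assume "2 * real j - 1 = 0"
  then have "real (2 * j) = real (Suc 0)" by simp
  then show False unfolding of_nat_eq_iff by presburger
qed

lemma S_summand_pred:
  assumes "1 \<le> k + j"
  shows "2 * real (k + j) * (2*real j - 1) * S_summand (k + j - 1) k = real j^2 * S_summand (k + j) k"
proof (cases j)
  case 0
  then show ?thesis using assms by (simp add: S_summand_eq_0)
next
  case (Suc i)
  then show ?thesis using S_summand_Suc_right[of i k] by (simp add: algebra_simps)
qed

definition cert_coeff :: "real \<Rightarrow> real \<Rightarrow> real" where
  "cert_coeff n k = - (k^2 * ((n + 1)*(2*n - 1) - 2*n*k)) / ((n + 1)*(2*n + 1 - 2*k))"

text \<open>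
  Here \<open>a0, a1, a2, b\<close> stand for the summands at \<open>(n-1,k), (n,k), (n+1,k), (n+1,k+1)\<close>
  with \<open>j = n - k\<close>, and the hypotheses are their term ratios.
\<close>
lemma certificate_identity:
  fixes n k j a0 a1 a2 b :: real
  assumes n: "n = k + j" and "0 < n" "0 \<le> k" "0 \<le> j" "2*j - 1 \<noteq> 0"
    and a2: "(j + 1)^2 * a2 = 2*(n + 1)*(2*j + 1) * a1"
    and b: "(k + 1)^2 * b = 2*(n + 1)*(2*k + 1) * a1"
    and a0: "2*n*(2*j - 1) * a0 = j^2 * a1"
  shows "(n + 1)^2*a2 - 4*(3*n^2 + 3*n + 1)*a1 + 32*n^2*a0
           = cert_coeff n (k + 1) * b - cert_coeff n k * a2"
proof -
  define e where "e = 2*j - 1"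
  have nz: "j + 1 \<noteq> 0" "k + 1 \<noteq> 0" "n + 1 \<noteq> 0" "2*j + 1 \<noteq> 0" "n \<noteq> 0" "e \<noteq> 0"
    using assms(2-5) unfolding e_def by auto
  define Z where "Z = a1 / (2*n*e*(j + 1)^2*(k + 1)^2)"
  have a1Z: "a1 = 2*n*e*(j + 1)^2*(k + 1)^2 * Z" unfolding Z_def using nz by simp
  have "2*n*e * a0 = 2*n*e * (j^2*(j + 1)^2*(k + 1)^2 * Z)"
    unfolding a0[unfolded e_def[symmetric]] a1Z by algebra
  then have a0Z: "a0 = j^2*(j + 1)^2*(k + 1)^2 * Z"
    using nz by simp
  have "(j + 1)^2 * a2 = (j + 1)^2 * ((n + 1)*(2*j + 1) * (4*n*e*(k + 1)^2 * Z))"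
    unfolding a2 a1Z by algebra
  then have a2Z: "a2 = (n + 1)*(2*j + 1) * (4*n*e*(k + 1)^2 * Z)"
    using nz by simp
  have "(k + 1)^2 * b = (k + 1)^2 * ((n + 1)*e * (4*n*(2*k + 1)*(j + 1)^2 * Z))"
    unfolding b a1Z by algebra
  then have bZ: "b = (n + 1)*e * (4*n*(2*k + 1)*(j + 1)^2 * Z)"
    using nz by simp
  have "2*n + 1 - 2*(k + 1) = e" "2*n + 1 - 2*k = 2*j + 1" using n unfolding e_def by simp_all
  then have cert: "cert_coeff n (k + 1) * b
               = - ((k + 1)^2 * ((n + 1)*(2*n - 1) - 2*n*(k + 1))) * (b / ((n + 1)*e))"
      "cert_coeff n k * a2 = - (k^2 * ((n + 1)*(2*n - 1) - 2*n*k)) * (a2 / ((n + 1)*(2*j + 1)))"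
    unfolding cert_coeff_def by simp_all
  have quot: "b / ((n + 1)*e) = 4*n*(2*k + 1)*(j + 1)^2 * Z"
      "a2 / ((n + 1)*(2*j + 1)) = 4*n*e*(k + 1)^2 * Z"
    using nz unfolding bZ a2Z by simp_all
  show ?thesis unfolding cert quot unfolding a2Z a1Z a0Z n e_def by algebra
qed

definition S_cert :: "nat \<Rightarrow> nat \<Rightarrow> real" where
  "S_cert n k = cert_coeff (real n) (real k) * S_summand (n + 1) k"

lemma S_summand_recurrence_telescopes:
  assumes "1 \<le> n" "k \<le> n + 1"
  shows "(real n + 1)^2 * S_summand (n+1) k - 4*(3*real n^2 + 3*real n + 1) * S_summand n k
           + 32*real n^2 * S_summand (n-1) k
         = S_cert n (k+1) - S_cert n k"
proof (cases "k \<le> n")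
  case True
  then obtain j where n: "n = k + j" using le_Suc_ex by blast
  have "2*real j - 1 \<noteq> 0" by (rule two_of_nat_minus_one_neq_0)
  moreover have "(real j + 1)^2 * S_summand (n+1) k = 2*(real n + 1)*(2*real j + 1) * S_summand n k"
    using S_summand_Suc_right[of j k] n by (simp add: algebra_simps)
  moreover have "(real k + 1)^2 * S_summand (n+1) (k+1) = 2*(real n + 1)*(2*real k + 1) * S_summand n k"
    using S_summand_Suc_left[of k j] n by (simp add: algebra_simps)
  ultimately show ?thesis
    unfolding S_cert_def of_nat_add of_nat_1
    using n assms(1) S_summand_pred[of k j] by (intro certificate_identity) auto
next
  case False
  then have k: "k = n + 1" using assms(2) by simp
  have "(real n + 1)*(2*real n - 1) - 2*real n*(real n + 1) = - (real n + 1)"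
    by (simp add: algebra_simps)
  then show ?thesis using k by (simp add: S_cert_def cert_coeff_def S_summand_eq_0 field_simps)
qed

lemma S_recurrence:
  assumes "1 \<le> n"
  shows "(real n + 1)^2 * real (S (n+1))
           = 4*(3*real n^2 + 3*real n + 1) * real (S n) - 32*real n^2 * real (S (n-1))"
proof -
  have sums: "real (S (n+1)) = (\<Sum>k<n+2. S_summand (n+1) k)"
    "real (S n) = (\<Sum>k<n+2. S_summand n k)" "real (S (n-1)) = (\<Sum>k<n+2. S_summand (n-1) k)"
    by (rule S_eq_sum_summand_lessThan; simp)+
  have "(real n + 1)^2 * real (S (n+1)) - 4*(3*real n^2 + 3*real n + 1) * real (S n)
          + 32*real n^2 * real (S (n-1))
        = (\<Sum>k<n+2. (real n + 1)^2 * S_summand (n+1) k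
             - 4*(3*real n^2 + 3*real n + 1) * S_summand n k + 32*real n^2 * S_summand (n-1) k)"
    unfolding sums by (simp only: sum.distrib sum_subtractf sum_distrib_left)
  also have "\<dots> = (\<Sum>k<n+2. S_cert n (Suc k) - S_cert n k)"
    by (rule sum.cong) (use assms S_summand_recurrence_telescopes in auto)
  also have "\<dots> = S_cert n (n+2) - S_cert n 0"
    by (rule sum_lessThan_telescope)
  also have "\<dots> = 0"
    by (simp add: S_cert_def cert_coeff_def S_summand_eq_0)
  finally show ?thesis by linarith
qed

lemma concave_quadratic_pos_between:
  fixes a b c l u r :: real
  assumes "0 \<le> a" "l \<le> r" "r \<le> u"
    and "0 < b*l - c - a*l^2" and u: "0 < b*u - c - a*u^2"
  shows "0 < b*r - c - a*r^2"
proof (cases "r = u")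
  case False
  then have "0 < (u - r) * (b*l - c - a*l^2)" "0 \<le> (r - l) * (b*u - c - a*u^2)"
      "0 \<le> a * (u - l) * (r - l) * (u - r)"
    using assms by auto
  moreover have "(u - l) * (b*r - c - a*r^2)
      = (u - r) * (b*l - c - a*l^2) + (r - l) * (b*u - c - a*u^2) + a * (u - l) * (r - l) * (u - r)"
    by (simp add: algebra_simps power2_eq_square)
  ultimately have "0 < (u - l) * (b*r - c - a*r^2)" by linarith
  then show ?thesis using assms(2,3) by (simp add: zero_less_mult_iff)
qed (use u in simp)

lemma convex_quadratic_pos_right:
  fixes a b c l r :: real
  assumes "0 \<le> a" "l \<le> r" "b \<le> 2*a*l" "0 < a*l^2 - b*l + c"
  shows "0 < a*r^2 - b*r + c"
proof -
  have "b \<le> a*(r + l)"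
    using assms(3) mult_left_mono[OF assms(2) assms(1)] unfolding distrib_left by linarith
  then have "0 \<le> (r - l) * (a*(r + l) - b)" using assms(2) by simp
  moreover have "a*r^2 - b*r + c = (a*l^2 - b*l + c) + (r - l) * (a*(r + l) - b)"
    by (simp add: algebra_simps power2_eq_square)
  ultimately show ?thesis using assms(4) by linarith
qed

(* The map \<phi>\<^sub>x of the header: S_ratio (n + 1) = ratio_next n (S_ratio n). *)
definition ratio_next :: "real \<Rightarrow> real \<Rightarrow> real" where
  "ratio_next x r = (4*(3*x^2 + 3*x + 1) - 32*x^2 / r) / (x + 1)^2"

lemma ratio_next_mono:
  assumes "0 < r" "r \<le> s"
  shows "ratio_next x r \<le> ratio_next x s"
proof -
  have "32*x^2 / s \<le> 32*x^2 / r" using assms by (intro divide_left_mono) auto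
  then show ?thesis unfolding ratio_next_def by (intro divide_right_mono) auto
qed

definition upper_num :: "real \<Rightarrow> real" where "upper_num x = 8*x^2 - 8*x + 10"
definition lower_num :: "real \<Rightarrow> real" where "lower_num x = 8*x^3 - 8*x^2 - 20"
definition ratio_upper :: "real \<Rightarrow> real" where "ratio_upper x = upper_num x / x^2"
definition ratio_lower :: "real \<Rightarrow> real" where "ratio_lower x = lower_num x / x^3"

lemma upper_num_pos: "0 < upper_num x"
proof -
  have "0 \<le> (2*x - 1)^2" by simp
  then show ?thesis unfolding upper_num_def by (simp add: power2_eq_square algebra_simps)
qed

lemma ratio_upper_step:
  fixes x :: real assumes "1 \<le> x"
  shows "ratio_next x (ratio_upper x) \<le> ratio_upper (x + 1)"
proof -
  have nz: "upper_num x \<noteq> 0" "x + 1 \<noteq> 0" "x \<noteq> 0"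
    using assms upper_num_pos[of x] by auto
  have "0 \<le> (10*x - 11)^2" by simp
  then have "0 \<le> 40*x^2 - 88*x + 60" by (simp add: power2_eq_square algebra_simps)
  then have "0 \<le> (40*x^2 - 88*x + 60) / ((x+1)^2 * upper_num x)"
    using upper_num_pos[of x] nz by (intro divide_nonneg_pos) auto
  moreover have "ratio_upper (x+1) - ratio_next x (ratio_upper x)
      = (40*x^2 - 88*x + 60) / ((x+1)^2 * upper_num x)"
    using nz unfolding ratio_upper_def ratio_next_def
    by (simp add: field_simps) (unfold upper_num_def, algebra)
  ultimately show ?thesis by linarith
qed

(* Here and below, positivity for x \<ge> 8 is read off the expansion in t = x - 8,
   all of whose coefficients are positive. *)
lemma lower_num_pos:
  fixes x :: real assumes "8 \<le> x"
  shows "0 < lower_num x"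
proof -
  define t where "t = x - 8"
  have "lower_num x = 3564 + t*(1408 + t*(184 + t*8))" unfolding lower_num_def t_def by algebra
  also have "0 < \<dots>" using assms unfolding t_def by (intro add_pos_nonneg mult_nonneg_nonneg) auto
  finally show ?thesis .
qed

lemma ratio_lower_pos: "8 \<le> x \<Longrightarrow> 0 < ratio_lower x"
  unfolding ratio_lower_def using lower_num_pos by simp

lemma ratio_lower_step:
  fixes x :: real assumes "8 \<le> x"
  shows "ratio_lower (x + 1) \<le> ratio_next x (ratio_lower x)"
proof -
  have nz: "lower_num x \<noteq> 0" "x + 1 \<noteq> 0" "x \<noteq> 0"
    using assms lower_num_pos[OF assms] by auto
  define t where "t = x - 8"
  have "48*x^3 - 352*x^2 - 160*x - 480 = 288 + t*(3424 + t*(800 + t*48))"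
    unfolding t_def by algebra
  also have "0 < \<dots>" using assms unfolding t_def by (intro add_pos_nonneg mult_nonneg_nonneg) auto
  finally have "0 \<le> (48*x^3 - 352*x^2 - 160*x - 480) / ((x+1)^3 * lower_num x)"
    using assms lower_num_pos[OF assms] by (intro divide_nonneg_pos) auto
  moreover have "ratio_next x (ratio_lower x) - ratio_lower (x+1)
      = (48*x^3 - 352*x^2 - 160*x - 480) / ((x+1)^3 * lower_num x)"
    using nz unfolding ratio_lower_def ratio_next_def
    by (simp add: field_simps) (unfold lower_num_def, algebra)
  ultimately show ?thesis by linarith
qed

definition ratio_gap :: "real \<Rightarrow> real \<Rightarrow> real" where
  "ratio_gap x r = 4*(3*x^2 + 3*x + 1)*r - 32*x^2 - (x + 1)^2*r^2"

definition ratio_slack :: "real \<Rightarrow> real \<Rightarrow> real" where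
  "ratio_slack x r = (1 + 1/(x*(x - 1)))*(x + 1)^2*r^2 - 4*(3*x^2 + 3*x + 1)*r + 32*x^2"

lemma ratio_gap_lower_pos:
  fixes x :: real assumes "8 \<le> x"
  shows "0 < ratio_gap x (ratio_lower x)"
proof -
  define t where "t = x - 8"
  have "64*x^6 + 48*x^5 + 16*x^4 - 400*x^3 - 720*x^2 - 800*x - 400
      = 18157936 + t*(13509600 + t*(4173744 + t*(686192 + t*(63376 + t*(3120 + t*64)))))"
    unfolding t_def by algebra
  also have "0 < \<dots>" using assms unfolding t_def by (intro add_pos_nonneg mult_nonneg_nonneg) auto
  finally have "0 < (64*x^6 + 48*x^5 + 16*x^4 - 400*x^3 - 720*x^2 - 800*x - 400) / x^6"
    using assms by simp
  also have "\<dots> = ratio_gap x (ratio_lower x)"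
    using assms unfolding ratio_gap_def ratio_lower_def
    by (simp add: field_simps) (unfold lower_num_def, algebra)
  finally show ?thesis .
qed

lemma ratio_gap_upper_pos:
  fixes x :: real assumes "8 \<le> x"
  shows "0 < ratio_gap x (ratio_upper x)"
proof -
  define t where "t = x - 8"
  have "24*x^4 - 72*x^3 + 36*x^2 - 40*x - 100 = 63324 + t*(35864 + t*(7524 + t*(696 + t*24)))"
    unfolding t_def by algebra
  also have "0 < \<dots>" using assms unfolding t_def by (intro add_pos_nonneg mult_nonneg_nonneg) auto
  finally have "0 < (24*x^4 - 72*x^3 + 36*x^2 - 40*x - 100) / x^4"
    using assms by simp
  also have "\<dots> = ratio_gap x (ratio_upper x)"
    using assms unfolding ratio_gap_def ratio_upper_def
    by (simp add: field_simps) (unfold upper_num_def, algebra)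
  finally show ?thesis .
qed

lemma ratio_slack_lower_pos:
  fixes x :: real assumes "8 \<le> x"
  shows "0 < ratio_slack x (ratio_lower x)"
proof -
  define t where "t = x - 8"
  have "16*x^7 - 96*x^6 + 96*x^5 + 64*x^4 + 400*x^3 + 320*x^2 + 400*x + 400
      = 12025360 + t*(12665232 + t*(5637824 + t*(1374608 + t*(198464 + t*(16992
          + t*(800 + t*16))))))"
    unfolding t_def by algebra
  also have "0 < \<dots>" using assms unfolding t_def by (intro add_pos_nonneg mult_nonneg_nonneg) auto
  finally have "0 < (16*x^7 - 96*x^6 + 96*x^5 + 64*x^4 + 400*x^3 + 320*x^2 + 400*x + 400)
                   / (x*(x - 1)*x^6)"
    using assms by simp
  also have "\<dots> = ratio_slack x (ratio_lower x)"
    using assms unfolding ratio_slack_def ratio_lower_def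
    by (simp add: field_simps) (unfold lower_num_def, algebra)
  finally show ?thesis .
qed

lemma ratio_slack_vertex_below_lower:
  fixes x :: real assumes "8 \<le> x"
  shows "4*(3*x^2 + 3*x + 1) \<le> 2*((1 + 1/(x*(x - 1)))*(x + 1)^2) * ratio_lower x"
proof -
  define t where "t = x - 8"
  have "4*x^7 - 8*x^5 - 20*x^4 - 40*x^3 - 16*x^2 - 40*x - 40
      = 8022680 + t*(7127256 + t*(2702896 + t*(567640 + t*(71340 + t*(5368 + t*(224 + t*4))))))"
    unfolding t_def by algebra
  also have "0 < \<dots>" using assms unfolding t_def by (intro add_pos_nonneg mult_nonneg_nonneg) auto
  finally have "0 \<le> (4*x^7 - 8*x^5 - 20*x^4 - 40*x^3 - 16*x^2 - 40*x - 40) / (x*(x - 1)*x^3)"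
    using assms by simp
  also have "\<dots> = 2*((1 + 1/(x*(x - 1)))*(x + 1)^2) * ratio_lower x - 4*(3*x^2 + 3*x + 1)"
    using assms unfolding ratio_lower_def
    by (simp add: field_simps) (unfold lower_num_def, algebra)
  finally show ?thesis by simp
qed

lemma ratio_next_minus_self:
  assumes "0 < r" "0 \<le> x"
  shows "ratio_next x r - r = ratio_gap x r / ((x + 1)^2 * r)"
  using assms unfolding ratio_next_def ratio_gap_def by (simp add: field_simps) algebra

lemma ratio_next_gt:
  fixes x r :: real
  assumes "8 \<le> x" "ratio_lower x \<le> r" "r \<le> ratio_upper x"
  shows "r < ratio_next x r"
proof -
  have "0 < r" using assms(2) ratio_lower_pos[OF assms(1)] by linarith
  have "0 < ratio_gap x r"
    using concave_quadratic_pos_between[OF _ assms(2,3)]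
      ratio_gap_lower_pos[OF assms(1)] ratio_gap_upper_pos[OF assms(1)]
    unfolding ratio_gap_def by simp
  then have "0 < ratio_gap x r / ((x + 1)^2 * r)" using \<open>0 < r\<close> assms(1) by simp
  moreover have "ratio_next x r - r = ratio_gap x r / ((x + 1)^2 * r)"
    using ratio_next_minus_self \<open>0 < r\<close> assms(1) by simp
  ultimately show ?thesis by linarith
qed

lemma ratio_next_lt:
  fixes x r :: real
  assumes "8 \<le> x" "ratio_lower x \<le> r"
  shows "ratio_next x r < (1 + 1/(x*(x - 1))) * r"
proof -
  have "0 < r" using assms(2) ratio_lower_pos[OF assms(1)] by linarith
  have slack: "0 < ratio_slack x r"
    using convex_quadratic_pos_right[OF _ assms(2) ratio_slack_vertex_below_lower[OF assms(1)]]
      ratio_slack_lower_pos[OF assms(1)] assms(1)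
    unfolding ratio_slack_def by simp
  have "(1 + 1/(x*(x - 1))) * r - ratio_next x r = ratio_slack x r / ((x + 1)^2 * r)"
    using \<open>0 < r\<close> assms(1) unfolding ratio_next_def ratio_slack_def
    by (simp add: field_simps) algebra
  moreover have "0 < ratio_slack x r / ((x + 1)^2 * r)"
    using slack \<open>0 < r\<close> assms(1) by simp
  ultimately show ?thesis by linarith
qed

lemma S_pos: "0 < S n"
  unfolding S_def by (rule sum_pos2[where i=0]) auto

lemma S_values: "real (S 0) = 1" "real (S 1) = 4" "real (S 2) = 20" "real (S 3) = 112"
  "real (S 4) = 676" "real (S 5) = 4304" "real (S 6) = 28496" "real (S 7) = 194240"
  "real (S 8) = 1353508"
proof -
  have s01: "real (S 0) = 1" "real (S 1) = 4" by (simp_all add: S_def numeral_2_eq_2)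
  have s2: "real (S 2) = 20" using S_recurrence[of 1] s01 by (simp add: numeral_2_eq_2)
  have s3: "real (S 3) = 112" using S_recurrence[of 2] s01 s2 by simp
  have s4: "real (S 4) = 676" using S_recurrence[of 3] s2 s3 by simp
  have s5: "real (S 5) = 4304" using S_recurrence[of 4] s3 s4 by simp
  have s6: "real (S 6) = 28496" using S_recurrence[of 5] s4 s5 by simp
  have s7: "real (S 7) = 194240" using S_recurrence[of 6] s5 s6 by simp
  have s8: "real (S 8) = 1353508" using S_recurrence[of 7] s6 s7 by simp
  show "real (S 0) = 1" "real (S 1) = 4" "real (S 2) = 20" "real (S 3) = 112"
    "real (S 4) = 676" "real (S 5) = 4304" "real (S 6) = 28496" "real (S 7) = 194240"
    "real (S 8) = 1353508"
    by (fact s01 s2 s3 s4 s5 s6 s7 s8)+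
qed

definition S_ratio :: "nat \<Rightarrow> real" where
  "S_ratio n = real (S n) / real (S (n - 1))"

lemma S_ratio_pos: "0 < S_ratio n"
  unfolding S_ratio_def using S_pos by simp

lemma S_ratio_Suc:
  assumes "1 \<le> n"
  shows "S_ratio (Suc n) = ratio_next (real n) (S_ratio n)"
proof -
  have "0 < real (S n)" "0 < real (S (n-1))" using S_pos by simp_all
  then show ?thesis
    using S_recurrence[OF assms] unfolding S_ratio_def ratio_next_def
    by (simp add: field_simps)
qed

lemma S_ratio_le_upper: "1 \<le> n \<Longrightarrow> S_ratio n \<le> ratio_upper (real n)"
proof (induction n rule: dec_induct)
  case base
  show ?case using S_values(1,2) by (simp add: S_ratio_def ratio_upper_def upper_num_def)
next
  case (step n)
  have "S_ratio (Suc n) = ratio_next (real n) (S_ratio n)" using S_ratio_Suc step.hyps by simp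
  also have "\<dots> \<le> ratio_next (real n) (ratio_upper (real n))"
    using ratio_next_mono S_ratio_pos step.IH by blast
  also have "\<dots> \<le> ratio_upper (real (Suc n))"
    using ratio_upper_step[of "real n"] step.hyps by (simp add: add.commute)
  finally show ?case .
qed

lemma S_ratio_ge_lower: "8 \<le> n \<Longrightarrow> ratio_lower (real n) \<le> S_ratio n"
proof (induction n rule: dec_induct)
  case base
  show ?case using S_values(8,9) by (simp add: S_ratio_def ratio_lower_def lower_num_def)
next
  case (step n)
  have "ratio_lower (real (Suc n)) \<le> ratio_next (real n) (ratio_lower (real n))"
    using ratio_lower_step[of "real n"] step.hyps by (simp add: add.commute)
  also have "\<dots> \<le> ratio_next (real n) (S_ratio n)"
    using ratio_next_mono ratio_lower_pos step.IH step.hyps by simp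
  also have "\<dots> = S_ratio (Suc n)" using S_ratio_Suc step.hyps by simp
  finally show ?case .
qed

lemma S_ratio_strict_bounds:
  assumes "8 \<le> m"
  shows "S_ratio m < S_ratio (Suc m)"
    and "S_ratio (Suc m) < (1 + 1 / (real m * (real m - 1))) * S_ratio m"
proof -
  have bounds: "ratio_lower (real m) \<le> S_ratio m" "S_ratio m \<le> ratio_upper (real m)"
    using S_ratio_ge_lower S_ratio_le_upper assms by simp_all
  have "S_ratio (Suc m) = ratio_next (real m) (S_ratio m)" using S_ratio_Suc assms by simp
  then show "S_ratio m < S_ratio (Suc m)"
    and "S_ratio (Suc m) < (1 + 1 / (real m * (real m - 1))) * S_ratio m"
    using ratio_next_gt[OF _ bounds] ratio_next_lt[OF _ bounds(1)] assms by simp_all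
qed

lemma sq_lt_mult_of_ratio_lt:
  fixes a b c :: real
  assumes "0 < a" "0 < b" "b / a < c / b"
  shows "b^2 < c * a"
  using assms by (simp add: field_simps power2_eq_square)

lemma mult_lt_sq_of_ratio_lt:
  fixes a b c q :: real
  assumes "0 < a" "0 < b" "c / b < q * (b / a)"
  shows "c * a < q * b^2"
  using assms by (simp add: field_simps power2_eq_square)

theorem theorem4p1:
  fixes m :: nat
  assumes "m \<ge> 2"
  shows "real (S m) ^ 2 < real (S (m+1)) * real (S (m-1)) \<and>
         real (S (m+1)) * real (S (m-1)) < (1 + 1 / (real m * (real m - 1))) * real (S m) ^ 2"
proof (cases "8 \<le> m")
  case True
  have pos: "0 < real (S (m-1))" "0 < real (S m)" using S_pos by simp_all
  have "S_ratio m = real (S m) / real (S (m-1))" "S_ratio (Suc m) = real (S (m+1)) / real (S m)"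
    unfolding S_ratio_def by simp_all
  then show ?thesis
    using S_ratio_strict_bounds[OF True] sq_lt_mult_of_ratio_lt[OF pos] mult_lt_sq_of_ratio_lt[OF pos]
    by simp
next
  case False
  with assms consider "m = 2" | "m = 3" | "m = 4" | "m = 5" | "m = 6" | "m = 7" by linarith
  \<comment> \<open>for \<open>m = 2\<close> the simplifier writes \<open>S (m - 1)\<close> as \<open>S (Suc 0)\<close>\<close>
  then show ?thesis
    using S_values S_values(2)[unfolded One_nat_def] by cases simp_all
qed

end
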